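(* Let $m\ge2$, $a,b\in(0,1/m)$, $f=f_{a,b}$, $X=X_{a,b}$, and $\delta>0$. Let $\mu$ be an ergodic $f$-invariant Borel probability measure which is $\delta$-biased and satisfies $\mu(X)=1$. Then $\chi^u(\mu)\le(1+2\delta)H(a)$, where $H(a)=-\log\sqrt{a(1-ma)}$.
   Context: $F_a(x)=\frac{x-(i-1)a}{a}$ on $[(i-1)a,ia)$, $i\in\{1,\ldots,m\}$, $F_a(x)=\frac{x-ma}{1-ma}$ on $[ma,1]$. $\Omega_i^+=[(i-1)a,ia)\times[0,1]$ for $i\le m$; $\Omega_i^+=[ma,1]\times[\frac{i-m-1}{m},\frac{i-m}{m})$ for $m+1\le i\le2m-1$; $\Omega_{2m}^+=[ma,1]\times[\frac{m-1}{m},1]$. $f_a(x,y)=(F_a(x),\frac{y}{m}+\frac{i-1}{m})$ on $\Omega_i^+$ for $i\le m$, $f_a(x,y)=(F_a(x),my-i+m+1)$ on $\Omega_i^+$ for $i\ge m+1$. $\Omega_i=\Omega_i^+\times[0,1]$, $f_{a,b}(x,y,z)=(f_a(x,y),(1-mb)z)$ on $\Omega_i$ for $i\le m$, $f_{a,b}(x,y,z)=(f_a(x,y),bz+1-mb+b(i-m-1))$ on $\Omega_i$ for $i\ge m+1$. $X_{a,b}=\bigcap_{n\in\mathbb Z}f_{a,b}^{-n}(\bigcup_i\mathrm{int}\,\Omega_i)$; for $p\in X$ let $(\omega_n)_{n\in\mathbb Z}$ be the unique sequence with $f^n(p)\in\mathrm{int}\,\Omega_{\omega_n}$. Define $\psi^u\colon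 X\to\mathbb R$ by $\psi^u(p)=-\log a$ if $\omega_0\le m$ and $\psi^u(p)=-\log(1-ma)$ if $\omega_0\ge m+1$; for $\mu$ with $\mu(X)=1$, the unstable Lyapunov exponent is $\chi^u(\mu)=\int_X\psi^u\,d\mu$. For $\delta\ge0$, an $f$-invariant Borel probability measure $\mu$ is $\delta$-biased if $\mu(X)=1$ and $\big|\mu(\bigcup_{i=1}^m\Omega_i)-\mu(\bigcup_{i=m+1}^{2m}\Omega_i)\big|\le\delta$. *)

theory Defs
  imports "HOL-Probability.Probability"
begin

definition Omega_plus :: "nat \<Rightarrow> real \<Rightarrow> nat \<Rightarrow> (real \<times> real) set" where
  "Omega_plus m a i =
     (if i \<le> m then {(real i - 1) * a ..< real i * a} \<times> {0..1}
      else if i \<le> 2*m - 1 then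
        {real m * a .. 1} \<times> {(real i - real m - 1) / real m ..< (real i - real m) / real m}
      else {real m * a .. 1} \<times> {(real m - 1) / real m .. 1})"

definition Omega :: "nat \<Rightarrow> real \<Rightarrow> nat \<Rightarrow> (real \<times> real \<times> real) set" where
  "Omega m a i = {(x, y, z). (x, y) \<in> Omega_plus m a i \<and> z \<in> {0..1}}"

definition f_piece :: "nat \<Rightarrow> real \<Rightarrow> real \<Rightarrow> nat \<Rightarrow> real \<times> real \<times> real \<Rightarrow> real \<times> real \<times> real" where
  "f_piece m a b i p = (case p of (x, y, z) \<Rightarrow>
     (if i \<le> m then
        ((x - (real i - 1) * a) / a, y / real m + (real i - 1) / real m, (1 - real m * b) * z)
      else
        ((x - real m * a) / (1 - real m * a), real m * y - real i + real m + 1,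
         b * z + 1 - real m * b + b * (real i - real m - 1))))"

text \<open>\<open>f_{a,b}\<close> on the cube \<open>[0,1]^3\<close> (the union of the \<open>\<Omega>_i\<close>); extended by the identity
  outside the cube (irrelevant for measures with \<open>\<mu>(X)=1\<close>).\<close>
definition f_ab :: "nat \<Rightarrow> real \<Rightarrow> real \<Rightarrow> real \<times> real \<times> real \<Rightarrow> real \<times> real \<times> real" where
  "f_ab m a b p =
     (if \<exists>i\<in>{1..2*m}. p \<in> Omega m a i
      then f_piece m a b (THE i. i \<in> {1..2*m} \<and> p \<in> Omega m a i) p
      else p)"

definition U_ab :: "nat \<Rightarrow> real \<Rightarrow> (real \<times> real \<times> real) set" where
  "U_ab m a = (\<Union>i\<in>{1..2*m}. interior (Omega m a i))"

text \<open>\<open>X = \<Inter>_{n\<in>\<int>} f^{-n}(U)\<close>: for \<open>n \<ge> 0\<close> the preimage under \<open>f^n\<close>, for \<open>n<0\<close> the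
  image under \<open>f^{|n|}\<close> (f is injective on the cube).\<close>
definition X_ab :: "nat \<Rightarrow> real \<Rightarrow> real \<Rightarrow> (real \<times> real \<times> real) set" where
  "X_ab m a b = {p. \<forall>k::nat. (f_ab m a b ^^ k) p \<in> U_ab m a \<and> p \<in> (f_ab m a b ^^ k) ` U_ab m a}"

definition psi_u :: "nat \<Rightarrow> real \<Rightarrow> real \<times> real \<times> real \<Rightarrow> real" where
  "psi_u m a p = (if p \<in> (\<Union>i\<in>{1..m}. Omega m a i) then - ln a else - ln (1 - real m * a))"

definition chi_u :: "nat \<Rightarrow> real \<Rightarrow> (real \<times> real \<times> real) measure \<Rightarrow> real" where
  "chi_u m a M = integral\<^sup>L M (psi_u m a)"

definition f_invariant :: "('a \<Rightarrow> 'a) \<Rightarrow> 'a measure \<Rightarrow> bool" where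
  "f_invariant f M \<longleftrightarrow> f \<in> M \<rightarrow>\<^sub>M M \<and> distr M M f = M"

definition ergodic :: "('a \<Rightarrow> 'a) \<Rightarrow> 'a measure \<Rightarrow> bool" where
  "ergodic f M \<longleftrightarrow> f_invariant f M \<and>
     (\<forall>A \<in> sets M. f -` A \<inter> space M = A \<longrightarrow> measure M A = 0 \<or> measure M A = 1)"

definition delta_biased :: "nat \<Rightarrow> real \<Rightarrow> real \<Rightarrow> real \<Rightarrow> (real \<times> real \<times> real) measure \<Rightarrow> bool" where
  "delta_biased m a b \<delta> M \<longleftrightarrow>
     f_invariant (f_ab m a b) M \<and> measure M (X_ab m a b) = 1 \<and>
     \<bar>measure M (\<Union>i\<in>{1..m}. Omega m a i) - measure M (\<Union>i\<in>{m+1..2*m}. Omega m a i)\<bar> \<le> \<delta>"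

definition H_a :: "nat \<Rightarrow> real \<Rightarrow> real" where
  "H_a m a = - ln (sqrt (a * (1 - real m * a)))"

end

theory Submission
  imports Defs
begin

text \<open>The potential \<open>\<psi>\<^sup>u\<close> takes only the two values \<open>-log a\<close> and \<open>-log (1 - m a)\<close>, on the
  left block \<open>\<Omega>\<^sub>1 \<union> \<dots> \<union> \<Omega>\<^sub>m\<close> and on the right block \<open>\<Omega>\<^sub>m\<^sub>+\<^sub>1 \<union> \<dots> \<union> \<Omega>\<^sub>2\<^sub>m\<close>. These blocks are disjoint
  and cover \<open>X\<close>, so \<open>\<chi>\<^sup>u(\<mu>)\<close> is a convex combination of the two values whose weights differ
  by at most \<open>\<delta>\<close>; hence each weight is at most \<open>(1 + \<delta>)/2\<close>, and \<open>\<chi>\<^sup>u(\<mu>)\<close> is at most \<open>1 + \<delta>\<close>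
  times the mean of the two values, which is \<open>H(a)\<close>.\<close>

abbreviation Omega_left :: "nat \<Rightarrow> real \<Rightarrow> (real \<times> real \<times> real) set" where
  "Omega_left m a \<equiv> \<Union>i\<in>{1..m}. Omega m a i"

abbreviation Omega_right :: "nat \<Rightarrow> real \<Rightarrow> (real \<times> real \<times> real) set" where
  "Omega_right m a \<equiv> \<Union>i\<in>{m+1..2*m}. Omega m a i"

lemma Omega_plus_sets_borel: "Omega_plus m a i \<in> sets borel"
  unfolding Omega_plus_def borel_prod[symmetric] by (auto intro!: pair_measureI)

lemma Omega_sets_borel: "Omega m a i \<in> sets borel"
proof -
  let ?reassoc = "\<lambda>p::real \<times> real \<times> real. ((fst p, fst (snd p)), snd (snd p))"
  have "Omega m a i = ?reassoc -` (Omega_plus m a i \<times> {0..1})"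
    by (auto simp: Omega_def)
  moreover have "Omega_plus m a i \<times> {0..1} \<in> sets (borel :: ((real \<times> real) \<times> real) measure)"
    using Omega_plus_sets_borel unfolding borel_prod[symmetric] by (auto intro!: pair_measureI)
  moreover have "?reassoc \<in> borel_measurable borel"
    by (intro borel_measurable_continuous_onI continuous_intros)
  ultimately show ?thesis
    using measurable_sets[of ?reassoc borel borel] by simp
qed

lemma fst_less_if_in_Omega_left:
  assumes "0 < a" "p \<in> Omega_left m a"
  shows "fst p < real m * a"
proof -
  obtain i where i: "i \<in> {1..m}" "p \<in> Omega m a i"
    using assms(2) by auto
  then have "fst p < real i * a"
    by (auto simp: Omega_def Omega_plus_def)
  also have "\<dots> \<le> real m * a"
    using i(1) assms(1) by (auto intro!: mult_right_mono)
  finally show ?thesis .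
qed

lemma fst_ge_if_in_Omega_right: "p \<in> Omega_right m a \<Longrightarrow> real m * a \<le> fst p"
  by (auto simp: Omega_def Omega_plus_def split: if_splits)

lemma Omega_left_Omega_right_disjoint: "0 < a \<Longrightarrow> Omega_left m a \<inter> Omega_right m a = {}"
  using fst_less_if_in_Omega_left fst_ge_if_in_Omega_right by (meson disjoint_iff not_less)

lemma X_ab_subset_Omega_left_right: "X_ab m a b \<subseteq> Omega_left m a \<union> Omega_right m a"
proof
  fix p assume "p \<in> X_ab m a b"
  then have "p \<in> U_ab m a"
    unfolding X_ab_def by (auto dest: spec[of _ 0])
  then obtain i where "i \<in> {1..2*m}" "p \<in> Omega m a i"
    unfolding U_ab_def using interior_subset by blast
  then show "p \<in> Omega_left m a \<union> Omega_right m a"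
    by (cases "i \<le> m") auto
qed

lemma (in prob_space) prob_add_eq_1_if_cover:
  assumes "A \<in> events" "B \<in> events" "A \<inter> B = {}" "C \<subseteq> A \<union> B" "prob C = 1"
  shows "prob A + prob B = 1"
proof -
  have "1 \<le> prob (A \<union> B)"
    using assms finite_measure_mono[of C "A \<union> B"] measure_notin_sets[of C] by fastforce
  then show ?thesis
    using finite_measure_Union[OF assms(1-3)] prob_le_1[of "A \<union> B"] by simp
qed

lemma (in prob_space) expectation_two_valued:
  assumes "S \<in> events"
  shows "expectation (\<lambda>p. if p \<in> S then \<alpha> else \<beta>) = \<alpha> * prob S + \<beta> * (1 - prob S)"
proof -
  have "(\<lambda>p. if p \<in> S then \<alpha> else \<beta>) = (\<lambda>p. \<beta> + (\<alpha> - \<beta>) * indicator S p)"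
    by (auto simp: fun_eq_iff indicator_def)
  moreover have "integrable M (indicator S :: _ \<Rightarrow> real)"
    using assms by (simp add: emeasure_eq_measure)
  ultimately show ?thesis
    using assms prob_space by (simp add: algebra_simps)
qed

lemma weighted_sum_le_of_balanced_weights:
  fixes \<alpha> \<beta> p q \<delta> :: real
  assumes "0 \<le> \<alpha>" "0 \<le> \<beta>" "p + q = 1" "\<bar>p - q\<bar> \<le> \<delta>"
  shows "\<alpha> * p + \<beta> * q \<le> (1 + \<delta>) * ((\<alpha> + \<beta>) / 2)"
proof -
  have "p \<le> (1 + \<delta>) / 2" "q \<le> (1 + \<delta>) / 2"
    using assms(3,4) by (auto simp: abs_le_iff)
  then have "\<alpha> * p + \<beta> * q \<le> \<alpha> * ((1 + \<delta>) / 2) + \<beta> * ((1 + \<delta>) / 2)"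
    using assms(1,2) by (intro add_mono mult_left_mono)
  then show ?thesis
    by (simp add: field_simps)
qed

lemma H_a_eq_mean:
  assumes "0 < a" "real m * a < 1"
  shows "H_a m a = (- ln a - ln (1 - real m * a)) / 2"
proof -
  have "H_a m a = - (ln (a * (1 - real m * a)) / 2)"
    using assms unfolding H_a_def by (simp add: ln_sqrt)
  also have "ln (a * (1 - real m * a)) = ln a + ln (1 - real m * a)"
    using assms by (intro ln_mult_pos) auto
  finally show ?thesis
    by (simp add: field_simps)
qed

lemma chi_u_eq:
  assumes "prob_space M" "Omega_left m a \<in> sets M"
  shows "chi_u m a M =
    - ln a * measure M (Omega_left m a) - ln (1 - real m * a) * (1 - measure M (Omega_left m a))"
  using prob_space.expectation_two_valued[OF assms]
  unfolding chi_u_def psi_u_def by simp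

theorem lemma3p6:
  fixes m :: nat and a b \<delta> :: real and M :: "(real \<times> real \<times> real) measure"
  assumes "m \<ge> 2"
    and "0 < a" "a < 1 / real m" "0 < b" "b < 1 / real m"
    and "\<delta> > 0"
    and "prob_space M" "sets M = sets borel"
    and "f_invariant (f_ab m a b) M"
    and "ergodic (f_ab m a b) M"
    and "delta_biased m a b \<delta> M"
    and "measure M (X_ab m a b) = 1"
  shows "chi_u m a M \<le> (1 + 2 * \<delta>) * H_a m a"
proof -
  interpret prob_space M by fact
  have ma: "0 < real m * a" "real m * a < 1"
    using assms(1-3) by (auto simp: field_simps)
  have "a \<le> real m * a"
    using assms(1,2) by simp
  then have "a < 1"
    using ma(2) by linarith
  have sets: "Omega_left m a \<in> events" "Omega_right m a \<in> events"
    using assms(8) Omega_sets_borel by auto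
  have sum: "prob (Omega_left m a) + prob (Omega_right m a) = 1"
    using prob_add_eq_1_if_cover[OF sets Omega_left_Omega_right_disjoint[OF assms(2)]
        X_ab_subset_Omega_left_right assms(12)] .
  have bias: "\<bar>prob (Omega_left m a) - prob (Omega_right m a)\<bar> \<le> \<delta>"
    using assms(11) unfolding delta_biased_def by simp
  have weights_nonneg: "0 \<le> - ln a" "0 \<le> - ln (1 - real m * a)"
    using assms(2) \<open>a < 1\<close> ma by simp_all
  from weighted_sum_le_of_balanced_weights[OF weights_nonneg sum bias]
  have "- ln a * prob (Omega_left m a) + - ln (1 - real m * a) * prob (Omega_right m a)
      \<le> (1 + \<delta>) * H_a m a"
    unfolding H_a_eq_mean[OF assms(2) ma(2)] by simp
  moreover have "prob (Omega_right m a) = 1 - prob (Omega_left m a)"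
    using sum by simp
  ultimately have "chi_u m a M \<le> (1 + \<delta>) * H_a m a"
    by (simp add: chi_u_eq[OF assms(7) sets(1)])
  also have "\<dots> \<le> (1 + 2 * \<delta>) * H_a m a"
    using H_a_eq_mean[OF assms(2) ma(2)] weights_nonneg assms(6) by (intro mult_right_mono) auto
  finally show ?thesis .
qed

end
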